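(* Let $(R,\mathcal{T})$ and $(S,\widetilde{\mathcal{T}})$ be transverse étale equivalence relations on a compact, metrizable, zero-dimensional space $X$. Transfer the topology of $R\times_XS$ to $R\vee S$ via the bijection $r\times s:R\times_XS\to R\vee S$, $((x,y),(y,z))\mapsto(x,z)$, and call the resulting topology $\mathcal{W}$. Then $(R\vee S,\mathcal{W})$ is an étale equivalence relation on $X$; if $R$ and $S$ are CEERs, then $(R\vee S,\mathcal{W})$ is a CEER. Moreover, $\mathcal{W}$ is the unique étale topology on $R\vee S$ whose relative topologies on $R$ and $S$ are $\mathcal{T}$ and $\widetilde{\mathcal{T}}$ respectively, and $R$ and $S$ are both open subsets of $(R\vee S,\mathcal{W})$.
   Context: An étale equivalence relation on $X$ is a countable equivalence relation $R\subset X\times X$ with a locally compact, Hausdorff, second countable topology in which the product $(x,y)\cdot(y,z)=(x,z)$ of composable pairs is continuous (relative topology from $R\times R$), the inverse $(x,y)\mapsto(y,x)$ is a homeomorphism, and the range map $r(x,y)=x$ is a local homeomorphism $R\to X$. A CEER is a compact étale equivalence relation. $R\vee S$ is the equivalence relation generated by $R$ and $S$. $R\times_XS=\{((x,y),(y,z)):(x,y)\in R,(y,z)\in S\}$ with the relative topology from $R\times S$, with $r((x,y),(y,z))=x$, $s((x,y),(y,z))=z$. $R$ and $S$ are transverse if $R\cap S=\Delta_X$ and there is a homeomorphism $h:R\times_XS\to S\times_XR$ with $r\circ h=r$, $s\circ h=s$; for transverse $R,S$ the map $r\times s:R\times_XS\to R\vee S$ is a bijection. *)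

theory Defs
  imports "HOL-Analysis.Analysis"
begin

definition local_homeomorphism_map :: "'a topology \<Rightarrow> 'b topology \<Rightarrow> ('a \<Rightarrow> 'b) \<Rightarrow> bool" where
  "local_homeomorphism_map A B f \<longleftrightarrow>
     f ` topspace A \<subseteq> topspace B \<and>
     (\<forall>p\<in>topspace A. \<exists>U. openin A U \<and> p \<in> U \<and> openin B (f ` U) \<and>
        homeomorphic_map (subtopology A U) (subtopology B (f ` U)) f)"

definition countable_equiv_rel :: "'a set \<Rightarrow> ('a \<times> 'a) set \<Rightarrow> bool" where
  "countable_equiv_rel X R \<longleftrightarrow> equiv X R \<and> (\<forall>x\<in>X. countable (R `` {x}))"

definition fibred :: "('a \<times> 'a) set \<Rightarrow> ('a \<times> 'a) set \<Rightarrow> (('a \<times> 'a) \<times> ('a \<times> 'a)) set" where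
  "fibred R S = {(p, q). p \<in> R \<and> q \<in> S \<and> snd p = fst q}"

definition fibred_top :: "('a \<times> 'a) topology \<Rightarrow> ('a \<times> 'a) topology \<Rightarrow>
    (('a \<times> 'a) \<times> ('a \<times> 'a)) topology" where
  "fibred_top TR TS = subtopology (prod_topology TR TS) (fibred (topspace TR) (topspace TS))"

definition rs_map :: "('a \<times> 'a) \<times> ('a \<times> 'a) \<Rightarrow> 'a \<times> 'a" where
  "rs_map w = (fst (fst w), snd (snd w))"

definition etale_eqrel :: "'a topology \<Rightarrow> ('a \<times> 'a) set \<Rightarrow> ('a \<times> 'a) topology \<Rightarrow> bool" where
  "etale_eqrel X R T \<longleftrightarrow>
     countable_equiv_rel (topspace X) R \<and> topspace T = R \<and>
     locally_compact_space T \<and> Hausdorff_space T \<and> second_countable T \<and>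
     continuous_map (fibred_top T T) T rs_map \<and>
     homeomorphic_map T T (\<lambda>(x, y). (y, x)) \<and>
     local_homeomorphism_map T X fst"

definition ceer :: "'a topology \<Rightarrow> ('a \<times> 'a) set \<Rightarrow> ('a \<times> 'a) topology \<Rightarrow> bool" where
  "ceer X R T \<longleftrightarrow> etale_eqrel X R T \<and> compact_space T"

definition join_rel :: "'a set \<Rightarrow> ('a \<times> 'a) set \<Rightarrow> ('a \<times> 'a) set \<Rightarrow> ('a \<times> 'a) set" where
  "join_rel X R S = \<Inter>{E. equiv X E \<and> R \<union> S \<subseteq> E}"

definition transverse :: "'a topology \<Rightarrow> ('a \<times> 'a) set \<Rightarrow> ('a \<times> 'a) topology \<Rightarrow>
    ('a \<times> 'a) set \<Rightarrow> ('a \<times> 'a) topology \<Rightarrow> bool" where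
  "transverse X R TR S TS \<longleftrightarrow>
     R \<inter> S = Id_on (topspace X) \<and>
     (\<exists>h. homeomorphic_map (fibred_top TR TS) (fibred_top TS TR) h \<and>
          (\<forall>w\<in>fibred R S. fst (fst (h w)) = fst (fst w) \<and> snd (snd (h w)) = snd (snd w)))"

text \<open>The topology W on R \<or> S transferred from R \<times>_X S via r \<times> s: a subset U of R \<or> S
  is open iff its preimage under r \<times> s is open in R \<times>_X S (for the bijection r \<times> s this is
  exactly the image topology).\<close>
definition join_top :: "'a topology \<Rightarrow> ('a \<times> 'a) set \<Rightarrow> ('a \<times> 'a) topology \<Rightarrow>
    ('a \<times> 'a) set \<Rightarrow> ('a \<times> 'a) topology \<Rightarrow> ('a \<times> 'a) topology" where
  "join_top X R TR S TS = topology (\<lambda>U. U \<subseteq> join_rel (topspace X) R S \<and>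
      openin (fibred_top TR TS) {w \<in> topspace (fibred_top TR TS). rs_map w \<in> U})"

end

theory Submission
  imports Defs
begin

text \<open>By transversality every element of \<open>R \<or> S\<close> factors uniquely as a product \<open>a \<cdot> b\<close> with
  \<open>a \<in> R\<close> and \<open>b \<in> S\<close>, so \<open>R \<or> S = R O S\<close> and \<open>r \<times> s\<close> is a homeomorphism onto \<open>W\<close>.
  The homeomorphism \<open>S \<times>\<^sub>X R \<cong> R \<times>\<^sub>X S\<close> lets one reorder \<open>b \<cdot> c\<close> into \<open>c' \<cdot> b'\<close>, which makes
  multiplication and inversion continuous, and \<open>fst\<close> stays a local homeomorphism because
  \<open>R \<times>\<^sub>X S \<rightarrow> R\<close> is the pullback of \<open>fst : S \<rightarrow> X\<close>. An inclusion of topologies over which the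
  same map to \<open>X\<close> is a local homeomorphism is an equality; this yields both the restrictions to
  \<open>R\<close> and \<open>S\<close> and the uniqueness of \<open>W\<close>.\<close>

lemma second_countable_prod_topology:
  assumes "second_countable A" "second_countable B"
  shows "second_countable (prod_topology A B)"
proof -
  obtain BA where BA: "countable BA" "\<And>V. V \<in> BA \<Longrightarrow> openin A V"
    "\<And>U x. openin A U \<Longrightarrow> x \<in> U \<Longrightarrow> \<exists>V \<in> BA. x \<in> V \<and> V \<subseteq> U"
    using assms(1) unfolding second_countable_def by metis
  obtain BB where BB: "countable BB" "\<And>V. V \<in> BB \<Longrightarrow> openin B V"
    "\<And>U x. openin B U \<Longrightarrow> x \<in> U \<Longrightarrow> \<exists>V \<in> BB. x \<in> V \<and> V \<subseteq> U"
    using assms(2) unfolding second_countable_def by metis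
  show ?thesis unfolding second_countable_def
  proof (intro exI conjI ballI allI impI)
    show "countable ((\<lambda>(U, V). U \<times> V) ` (BA \<times> BB))"
      using BA(1) BB(1) by auto
    show "openin (prod_topology A B) W" if "W \<in> (\<lambda>(U, V). U \<times> V) ` (BA \<times> BB)" for W
      using that BA(2) BB(2) by (auto simp: openin_prod_Times_iff)
    fix W p assume "openin (prod_topology A B) W \<and> p \<in> W"
    then obtain U V where UV: "openin A U" "openin B V" "fst p \<in> U" "snd p \<in> V" "U \<times> V \<subseteq> W"
      unfolding openin_prod_topology_alt by (metis prod.collapse)
    obtain U' where "U' \<in> BA" "fst p \<in> U'" "U' \<subseteq> U" using BA(3) UV by metis
    moreover obtain V' where "V' \<in> BB" "snd p \<in> V'" "V' \<subseteq> V" using BB(3) UV by metis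
    ultimately show "\<exists>V\<in>(\<lambda>(U, V). U \<times> V) ` (BA \<times> BB). p \<in> V \<and> V \<subseteq> W"
      using UV(5) by (intro bexI[of _ "U' \<times> V'"]) (auto simp: mem_Times_iff)
  qed
qed

lemma continuous_map_locally:
  assumes "\<And>x. x \<in> topspace X \<Longrightarrow> \<exists>Q. openin X Q \<and> x \<in> Q \<and> continuous_map (subtopology X Q) Y f"
  shows "continuous_map X Y f"
  by (rule pasting_lemma[where I = "{Q. openin X Q \<and> continuous_map (subtopology X Q) Y f}"
        and T = id and f = "\<lambda>_. f"]) (use assms in auto)

lemma homeomorphic_map_subset:
  assumes "homeomorphic_map (subtopology A U) (subtopology B (f ` U)) f"
    "U' \<subseteq> U" "U \<subseteq> topspace A" "f ` U \<subseteq> topspace B"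
  shows "homeomorphic_map (subtopology A U') (subtopology B (f ` U')) f"
proof -
  have "homeomorphic_map (subtopology (subtopology A U) U') (subtopology (subtopology B (f ` U)) (f ` U')) f"
    by (rule homeomorphic_map_subtopologies[OF assms(1)]) (use assms in auto)
  moreover have "U \<inter> U' = U'" "f ` U \<inter> f ` U' = f ` U'" using assms(2) by auto
  ultimately show ?thesis by (simp add: subtopology_subtopology)
qed

lemma homeomorphic_maps_inv_into:
  assumes "homeomorphic_map X Y f"
  shows "homeomorphic_maps X Y f (inv_into (topspace X) f)"
proof -
  obtain g where g: "homeomorphic_maps X Y f g" using assms homeomorphic_map_maps by blast
  have "inj_on f (topspace X)" using assms homeomorphic_imp_injective_map by blast
  moreover have "g y \<in> topspace X" "f (g y) = y" if "y \<in> topspace Y" for y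
    using g that continuous_map_image_subset_topspace unfolding homeomorphic_maps_def by blast+
  ultimately show ?thesis
    by (intro homeomorphic_maps_eq[OF g]) (metis inv_into_f_eq)+
qed

lemma openin_image_homeomorphic_map_subtopology:
  assumes "openin A U" "openin B (f ` U)"
    "homeomorphic_map (subtopology A U) (subtopology B (f ` U)) f" "openin A Q" "Q \<subseteq> U"
  shows "openin B (f ` Q)"
proof -
  have "openin (subtopology A U) Q" using assms openin_open_subtopology by blast
  then have "openin (subtopology B (f ` U)) (f ` Q)"
    using homeomorphic_imp_open_map[OF assms(3)] unfolding open_map_def by blast
  then show ?thesis using assms(2) openin_open_subtopology by blast
qed

lemma local_homeomorphism_map_imp_continuous_map:
  assumes "local_homeomorphism_map A B f"
  shows "continuous_map A B f"
proof (rule continuous_map_locally)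
  fix p assume "p \<in> topspace A"
  then obtain U where U: "openin A U" "p \<in> U"
      "homeomorphic_map (subtopology A U) (subtopology B (f ` U)) f"
    using assms unfolding local_homeomorphism_map_def by blast
  then show "\<exists>Q. openin A Q \<and> p \<in> Q \<and> continuous_map (subtopology A Q) B f"
    by (metis homeomorphic_imp_continuous_map continuous_map_into_fulltopology)
qed

lemma local_homeomorphism_map_nbhd:
  assumes "local_homeomorphism_map A B f" "openin A T" "p \<in> T"
  obtains U where "openin A U" "p \<in> U" "U \<subseteq> T" "openin B (f ` U)"
     "homeomorphic_map (subtopology A U) (subtopology B (f ` U)) f"
proof -
  obtain U where U: "openin A U" "p \<in> U" "openin B (f ` U)"
      "homeomorphic_map (subtopology A U) (subtopology B (f ` U)) f"
    using assms openin_subset unfolding local_homeomorphism_map_def by blast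
  show ?thesis
  proof (rule that[of "U \<inter> T"])
    show "openin B (f ` (U \<inter> T))"
      using openin_image_homeomorphic_map_subtopology[OF U(1,3,4)] U assms by auto
    show "homeomorphic_map (subtopology A (U \<inter> T)) (subtopology B (f ` (U \<inter> T))) f"
      by (rule homeomorphic_map_subset[OF U(4)]) (use U openin_subset in auto)
  qed (use U assms in auto)
qed

lemma local_homeomorphism_map_subtopology:
  assumes "local_homeomorphism_map A B f" "openin A T"
  shows "local_homeomorphism_map (subtopology A T) B f"
  unfolding local_homeomorphism_map_def
proof (intro conjI ballI)
  show "f ` topspace (subtopology A T) \<subseteq> topspace B"
    using assms unfolding local_homeomorphism_map_def by auto
  fix p assume "p \<in> topspace (subtopology A T)"
  then obtain U where U: "openin A U" "p \<in> U" "U \<subseteq> T" "openin B (f ` U)"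
     "homeomorphic_map (subtopology A U) (subtopology B (f ` U)) f"
    using local_homeomorphism_map_nbhd[OF assms] by auto
  then show "\<exists>U. openin (subtopology A T) U \<and> p \<in> U \<and> openin B (f ` U) \<and>
         homeomorphic_map (subtopology (subtopology A T) U) (subtopology B (f ` U)) f"
    using assms(2)
    by (intro exI[of _ U]) (auto simp: openin_open_subtopology subtopology_subtopology Int_absorb1)
qed

lemma local_homeomorphism_map_compose:
  assumes f: "local_homeomorphism_map A B f" and g: "local_homeomorphism_map B C g"
  shows "local_homeomorphism_map A C (g \<circ> f)"
  unfolding local_homeomorphism_map_def
proof (intro conjI ballI)
  show "(g \<circ> f) ` topspace A \<subseteq> topspace C"
    using f g unfolding local_homeomorphism_map_def by auto
  fix p assume p: "p \<in> topspace A"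
  then have "f p \<in> topspace B" using f unfolding local_homeomorphism_map_def by auto
  then obtain V where V: "openin B V" "f p \<in> V" "openin C (g ` V)"
      "homeomorphic_map (subtopology B V) (subtopology C (g ` V)) g"
    using g unfolding local_homeomorphism_map_def by blast
  have "openin A {x \<in> topspace A. f x \<in> V}"
    using local_homeomorphism_map_imp_continuous_map[OF f] V(1) by (simp add: continuous_map_def)
  then obtain U where U: "openin A U" "p \<in> U" "U \<subseteq> {x \<in> topspace A. f x \<in> V}"
     "openin B (f ` U)" "homeomorphic_map (subtopology A U) (subtopology B (f ` U)) f"
    using local_homeomorphism_map_nbhd[OF f] p V(2) by (metis (mono_tags, lifting) mem_Collect_eq)
  have fU: "f ` U \<subseteq> V" using U(3) by auto
  have "homeomorphic_map (subtopology B (f ` U)) (subtopology C (g ` f ` U)) g"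
    by (rule homeomorphic_map_subset[OF V(4) fU]) (use V openin_subset in auto)
  then show "\<exists>U. openin A U \<and> p \<in> U \<and> openin C ((g \<circ> f) ` U) \<and>
         homeomorphic_map (subtopology A U) (subtopology C ((g \<circ> f) ` U)) (g \<circ> f)"
    using U openin_image_homeomorphic_map_subtopology[OF V(1,3,4) U(4) fU]
      homeomorphic_map_compose[OF U(5)]
    by (intro exI[of _ U]) (simp add: image_comp)
qed

lemma homeomorphic_imp_local_homeomorphism_map:
  assumes "homeomorphic_map A B f"
  shows "local_homeomorphism_map A B f"
proof -
  have "f ` topspace A = topspace B"
    using assms homeomorphic_imp_surjective_map by blast
  then show ?thesis
    using assms unfolding local_homeomorphism_map_def
    by (metis openin_topspace subset_refl subtopology_topspace)
qed

lemma local_homeomorphism_map_cong: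
  assumes "local_homeomorphism_map A B f" "\<And>x. x \<in> topspace A \<Longrightarrow> f x = g x"
  shows "local_homeomorphism_map A B g"
  unfolding local_homeomorphism_map_def
proof (intro conjI ballI)
  show "g ` topspace A \<subseteq> topspace B" using assms unfolding local_homeomorphism_map_def by auto
  fix p assume "p \<in> topspace A"
  then obtain U where U: "openin A U" "p \<in> U" "openin B (f ` U)"
      "homeomorphic_map (subtopology A U) (subtopology B (f ` U)) f"
    using assms unfolding local_homeomorphism_map_def by blast
  have "f ` U = g ` U" using assms(2) openin_subset[OF U(1)] by (intro image_cong) auto
  then show "\<exists>U. openin A U \<and> p \<in> U \<and> openin B (g ` U) \<and>
         homeomorphic_map (subtopology A U) (subtopology B (g ` U)) g"
    using U assms(2) openin_subset[OF U(1)]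
    by (intro exI[of _ U]) (auto intro: homeomorphic_map_eq)
qed

text \<open>Two topologies on the same set, one finer than the other, over which the same map
  is a local homeomorphism coincide: a small open set of the finer topology is the preimage
  of its image under a chart of the coarser one.\<close>
lemma local_homeomorphism_map_topology_unique:
  assumes same: "topspace A = topspace B" and finer: "continuous_map A B id"
    and "local_homeomorphism_map A X f" "local_homeomorphism_map B X f"
  shows "A = B"
proof -
  have B_A: "openin A Q" if "openin B Q" for Q
  proof -
    have "{x \<in> topspace A. id x \<in> Q} = Q" using openin_subset[OF that] same by auto
    then show ?thesis using finer that unfolding continuous_map_def by metis
  qed
  have "openin B Q" if Q: "openin A Q" for Q
  proof (subst openin_subopen, intro ballI)
    fix p assume p: "p \<in> Q"
    obtain UB where UB: "openin B UB" "p \<in> UB"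
        "homeomorphic_map (subtopology B UB) (subtopology X (f ` UB)) f"
      using assms(4) p openin_subset[OF Q] same unfolding local_homeomorphism_map_def by blast
    obtain U where U: "p \<in> U" "U \<subseteq> Q \<inter> UB" "openin X (f ` U)"
      using local_homeomorphism_map_nbhd[OF assms(3), of "Q \<inter> UB" p] Q B_A[OF UB(1)] p UB(2)
      by blast
    have inj: "inj_on f UB"
      using homeomorphic_imp_injective_map[OF UB(3)] openin_subset[OF UB(1)] by (simp add: Int_absorb1)
    define T where "T = {x \<in> topspace B. f x \<in> f ` U} \<inter> UB"
    have "openin B T" unfolding T_def
      using local_homeomorphism_map_imp_continuous_map[OF assms(4)] U(3) UB(1)
      by (intro openin_Int) (auto simp: continuous_map_def)
    moreover have "T \<subseteq> Q"
      using U(2) inj unfolding T_def by (auto dest: inj_onD)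
    moreover have "p \<in> T" unfolding T_def using U UB(1,2) openin_subset by auto
    ultimately show "\<exists>T. openin B T \<and> p \<in> T \<and> T \<subseteq> Q" by blast
  qed
  with B_A show ?thesis by (auto simp: topology_eq)
qed

lemma mem_fibred_iff: "w \<in> fibred A B \<longleftrightarrow> fst w \<in> A \<and> snd w \<in> B \<and> snd (fst w) = fst (snd w)"
  unfolding fibred_def by (cases w) auto

lemma topspace_fibred_top: "topspace (fibred_top A B) = fibred (topspace A) (topspace B)"
  unfolding fibred_top_def fibred_def by auto

lemma continuous_map_fibred_top_fst: "continuous_map (fibred_top A B) A fst"
  unfolding fibred_top_def by (intro continuous_map_from_subtopology continuous_map_fst)

lemma continuous_map_fibred_top_snd: "continuous_map (fibred_top A B) B snd"
  unfolding fibred_top_def by (intro continuous_map_from_subtopology continuous_map_snd)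

lemma continuous_map_into_fibred_top:
  assumes "continuous_map Z A f" "continuous_map Z B g" "\<And>z. z \<in> topspace Z \<Longrightarrow> snd (f z) = fst (g z)"
  shows "continuous_map Z (fibred_top A B) (\<lambda>z. (f z, g z))"
proof -
  have "f z \<in> topspace A" "g z \<in> topspace B" if "z \<in> topspace Z" for z
    using assms(1,2) that continuous_map_image_subset_topspace by blast+
  then show ?thesis
    unfolding fibred_top_def continuous_map_in_subtopology
    using assms by (auto intro!: continuous_map_pairedI simp: fibred_def)
qed

lemma closedin_fibred:
  assumes "Hausdorff_space X" "continuous_map A X snd" "continuous_map B X fst"
  shows "closedin (prod_topology A B) (fibred (topspace A) (topspace B))"
proof -
  have "closedin (prod_topology A B)
      {w \<in> topspace (prod_topology A B). (snd \<circ> fst) w = (fst \<circ> snd) w}"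
    using assms
    by (intro closedin_continuous_maps_eq continuous_map_compose[OF continuous_map_fst]
        continuous_map_compose[OF continuous_map_snd])
  moreover have "{w \<in> topspace (prod_topology A B). (snd \<circ> fst) w = (fst \<circ> snd) w}
      = fibred (topspace A) (topspace B)"
    by (auto simp: mem_fibred_iff)
  ultimately show ?thesis by simp
qed

lemma Hausdorff_space_fibred_top:
  "Hausdorff_space A \<Longrightarrow> Hausdorff_space B \<Longrightarrow> Hausdorff_space (fibred_top A B)"
  unfolding fibred_top_def by (simp add: Hausdorff_space_prod_topology Hausdorff_space_subtopology)

lemma second_countable_fibred_top:
  "second_countable A \<Longrightarrow> second_countable B \<Longrightarrow> second_countable (fibred_top A B)"
  unfolding fibred_top_def by (intro second_countable_subtopology second_countable_prod_topology)

lemma locally_compact_space_fibred_top: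
  assumes "Hausdorff_space X" "continuous_map A X snd" "continuous_map B X fst"
    "locally_compact_space A" "locally_compact_space B"
  shows "locally_compact_space (fibred_top A B)"
  unfolding fibred_top_def using assms closedin_fibred[OF assms(1-3)]
  by (intro locally_compact_space_closed_subset) (simp_all add: locally_compact_space_prod_topology)

lemma compact_space_fibred_top:
  assumes "Hausdorff_space X" "continuous_map A X snd" "continuous_map B X fst"
    "compact_space A" "compact_space B"
  shows "compact_space (fibred_top A B)"
  unfolding fibred_top_def using assms closedin_fibred[OF assms(1-3)]
  by (intro compact_space_subtopology closedin_compact_space) (simp_all add: compact_space_prod_topology)

text \<open>The pullback of a local homeomorphism is a local homeomorphism: a chart \<open>V\<close> of
  \<open>fst\<close> on \<open>B\<close> with inverse \<open>\<sigma>\<close> gives the local inverse \<open>a \<mapsto> (a, \<sigma> (snd a))\<close>.\<close>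
lemma local_homeomorphism_map_fibred_top_fst:
  assumes snd_cont: "continuous_map A X snd" and fst_lh: "local_homeomorphism_map B X fst"
  shows "local_homeomorphism_map (fibred_top A B) A fst"
  unfolding local_homeomorphism_map_def
proof (intro conjI ballI)
  let ?F = "fibred_top A B"
  show "fst ` topspace ?F \<subseteq> topspace A" by (auto simp: topspace_fibred_top mem_fibred_iff)
  fix w assume w: "w \<in> topspace ?F"
  then have "snd w \<in> topspace B" by (auto simp: topspace_fibred_top mem_fibred_iff)
  then obtain V where V: "openin B V" "snd w \<in> V" "openin X (fst ` V)"
      "homeomorphic_map (subtopology B V) (subtopology X (fst ` V)) fst"
    using fst_lh unfolding local_homeomorphism_map_def by blast
  obtain \<sigma> where \<sigma>: "homeomorphic_maps (subtopology B V) (subtopology X (fst ` V)) fst \<sigma>"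
    using V(4) homeomorphic_map_maps by blast
  have VB: "V \<subseteq> topspace B" and VX: "fst ` V \<subseteq> topspace X"
    using openin_subset[OF V(1)] openin_subset[OF V(3)] .
  have \<sigma>c: "continuous_map (subtopology X (fst ` V)) (subtopology B V) \<sigma>"
    and \<sigma>_fst: "\<And>v. v \<in> V \<Longrightarrow> \<sigma> (fst v) = v"
    using \<sigma> VB unfolding homeomorphic_maps_def by auto
  have fst_\<sigma>: "fst (\<sigma> y) = y" if "y \<in> fst ` V" for y
  proof -
    have "y \<in> topspace (subtopology X (fst ` V))" using that VX by auto
    then show ?thesis using \<sigma> unfolding homeomorphic_maps_def by blast
  qed
  have \<sigma>V: "\<sigma> y \<in> V" if "y \<in> fst ` V" for y
  proof -
    have "y \<in> topspace (subtopology X (fst ` V))" using that VX by auto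
    then show ?thesis using continuous_map_image_subset_topspace[OF \<sigma>c] by auto
  qed
  define N where "N = {u \<in> topspace ?F. snd u \<in> V}"
  define M where "M = {a \<in> topspace A. snd a \<in> fst ` V}"
  have "openin ?F N" unfolding N_def
    using continuous_map_fibred_top_snd V(1) unfolding continuous_map_def by blast
  moreover have "openin A M" unfolding M_def
    using snd_cont V(3) by (simp add: continuous_map_def)
  moreover have NM: "fst ` N = M"
  proof
    show "fst ` N \<subseteq> M" unfolding N_def M_def by (force simp: topspace_fibred_top mem_fibred_iff)
    show "M \<subseteq> fst ` N"
    proof
      fix a assume "a \<in> M"
      then obtain v where "a \<in> topspace A" "v \<in> V" "snd a = fst v" unfolding M_def by auto
      then have "(a, v) \<in> N" unfolding N_def using VB by (auto simp: topspace_fibred_top mem_fibred_iff)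
      then show "a \<in> fst ` N" by force
    qed
  qed
  moreover have "homeomorphic_maps (subtopology ?F N) (subtopology A M) fst (\<lambda>a. (a, \<sigma> (snd a)))"
    unfolding homeomorphic_maps_def
  proof (intro conjI ballI)
    show "continuous_map (subtopology ?F N) (subtopology A M) fst"
      unfolding continuous_map_in_subtopology
      using continuous_map_from_subtopology[OF continuous_map_fibred_top_fst] NM by auto
    have "continuous_map (subtopology A M) (subtopology X (fst ` V)) snd"
      unfolding continuous_map_in_subtopology
      using continuous_map_from_subtopology[OF snd_cont] M_def by auto
    then have \<sigma>_snd: "continuous_map (subtopology A M) B (\<lambda>a. \<sigma> (snd a))"
      using continuous_map_into_fulltopology[OF continuous_map_compose[OF _ \<sigma>c]] by (simp add: o_def)
    have "continuous_map (subtopology A M) ?F (\<lambda>a. (a, \<sigma> (snd a)))"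
      by (rule continuous_map_into_fibred_top[OF continuous_map_from_subtopology \<sigma>_snd])
        (use fst_\<sigma> in \<open>auto simp: M_def\<close>)
    moreover have "(a, \<sigma> (snd a)) \<in> N" if "a \<in> topspace (subtopology A M)" for a
      using that fst_\<sigma> \<sigma>V VB unfolding N_def M_def by (auto simp: topspace_fibred_top mem_fibred_iff)
    ultimately show "continuous_map (subtopology A M) (subtopology ?F N) (\<lambda>a. (a, \<sigma> (snd a)))"
      unfolding continuous_map_in_subtopology by auto
    fix u assume "u \<in> topspace (subtopology ?F N)"
    then show "(fst u, \<sigma> (snd (fst u))) = u"
      using \<sigma>_fst unfolding N_def by (auto simp: topspace_fibred_top mem_fibred_iff)
  qed auto
  moreover have "w \<in> N" unfolding N_def using w V(2) by auto
  ultimately show "\<exists>U. openin ?F U \<and> w \<in> U \<and> openin A (fst ` U) \<and>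
        homeomorphic_map (subtopology ?F U) (subtopology A (fst ` U)) fst"
    using homeomorphic_maps_map by (intro exI[of _ N]) auto
qed

context
  fixes X :: "'a topology" and R :: "('a \<times> 'a) set" and T :: "('a \<times> 'a) topology"
  assumes E: "etale_eqrel X R T"
begin

lemma etale_eqrel_equiv: "equiv (topspace X) R"
  and etale_eqrel_topspace: "topspace T = R"
  and etale_eqrel_product_continuous: "continuous_map (fibred_top T T) T rs_map"
  and etale_eqrel_inverse_homeomorphic: "homeomorphic_map T T (\<lambda>(x, y). (y, x))"
  and etale_eqrel_fst_local_homeomorphism: "local_homeomorphism_map T X fst"
  using E unfolding etale_eqrel_def countable_equiv_rel_def by auto

lemma etale_eqrel_subset: "R \<subseteq> topspace X \<times> topspace X"
  and etale_eqrel_refl: "x \<in> topspace X \<Longrightarrow> (x, x) \<in> R"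
  and etale_eqrel_sym: "(x, y) \<in> R \<Longrightarrow> (y, x) \<in> R"
  and etale_eqrel_trans: "(x, y) \<in> R \<Longrightarrow> (y, z) \<in> R \<Longrightarrow> (x, z) \<in> R"
  using etale_eqrel_equiv unfolding equiv_def refl_on_def sym_def trans_def by blast+

lemma etale_eqrel_inverse_continuous: "continuous_map T T (\<lambda>(x, y). (y, x))"
  using etale_eqrel_inverse_homeomorphic homeomorphic_imp_continuous_map by blast

lemma etale_eqrel_fst_continuous: "continuous_map T X fst"
  using local_homeomorphism_map_imp_continuous_map[OF etale_eqrel_fst_local_homeomorphism] .

lemma etale_eqrel_snd_continuous: "continuous_map T X snd"
proof -
  have "continuous_map T X (fst \<circ> (\<lambda>(x, y). (y, x)))"
    using etale_eqrel_inverse_continuous etale_eqrel_fst_continuous by (rule continuous_map_compose)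
  then show ?thesis by (rule continuous_map_eq) auto
qed

text \<open>Near \<open>x\<close>, choose a local section \<open>g\<close> of \<open>fst\<close>; then \<open>y \<mapsto> g y \<cdot> (g y)\<inverse> = (y, y)\<close>
  is continuous.\<close>
lemma etale_eqrel_diagonal_continuous: "continuous_map X T (\<lambda>x. (x, x))"
proof (rule continuous_map_locally)
  fix x assume "x \<in> topspace X"
  then have "(x, x) \<in> topspace T" using etale_eqrel_refl etale_eqrel_topspace by auto
  then obtain V where V: "openin T V" "(x, x) \<in> V" "openin X (fst ` V)"
      "homeomorphic_map (subtopology T V) (subtopology X (fst ` V)) fst"
    using etale_eqrel_fst_local_homeomorphism unfolding local_homeomorphism_map_def by blast
  obtain g where g: "homeomorphic_maps (subtopology T V) (subtopology X (fst ` V)) fst g"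
    using V(4) homeomorphic_map_maps by blast
  have gc: "continuous_map (subtopology X (fst ` V)) T g"
    using g continuous_map_into_fulltopology unfolding homeomorphic_maps_def by blast
  have "continuous_map (subtopology X (fst ` V)) T (\<lambda>y. rs_map (g y, (\<lambda>(x, y). (y, x)) (g y)))"
    using continuous_map_compose[OF continuous_map_into_fibred_top[OF gc
          continuous_map_compose[OF gc etale_eqrel_inverse_continuous]] etale_eqrel_product_continuous]
    by (auto simp: o_def split: prod.splits)
  moreover have "rs_map (g y, (\<lambda>(x, y). (y, x)) (g y)) = (y, y)"
    if "y \<in> topspace (subtopology X (fst ` V))" for y
  proof -
    have "fst (g y) = y" using g that unfolding homeomorphic_maps_def by blast
    then show ?thesis by (simp add: rs_map_def case_prod_beta)
  qed
  ultimately have "continuous_map (subtopology X (fst ` V)) T (\<lambda>x. (x, x))"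
    by (rule continuous_map_eq)
  then show "\<exists>Q. openin X Q \<and> x \<in> Q \<and> continuous_map (subtopology X Q) T (\<lambda>x. (x, x))"
    using V by (intro exI[of _ "fst ` V"]) force
qed

lemma openin_etale_eqrel_Id_on: "openin T (Id_on (topspace X))"
proof (subst openin_subopen, intro ballI)
  fix p assume "p \<in> Id_on (topspace X)"
  then obtain x where x: "x \<in> topspace X" "p = (x, x)" by (auto simp: Id_on_def)
  then have "(x, x) \<in> topspace T" using etale_eqrel_refl etale_eqrel_topspace by auto
  then obtain V where V: "openin T V" "(x, x) \<in> V"
      "homeomorphic_map (subtopology T V) (subtopology X (fst ` V)) fst"
    using etale_eqrel_fst_local_homeomorphism unfolding local_homeomorphism_map_def by blast
  have inj: "inj_on fst V"
    using homeomorphic_imp_injective_map[OF V(3)] openin_subset[OF V(1)] by (simp add: Int_absorb1)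
  define N where "N = {q \<in> V. fst q \<in> {y \<in> topspace X. (y, y) \<in> V}}"
  have "openin X {y \<in> topspace X. (y, y) \<in> V}"
    using etale_eqrel_diagonal_continuous V(1) by (rule openin_continuous_map_preimage)
  then have "openin T N"
    unfolding N_def by (rule openin_continuous_map_preimage_gen[OF etale_eqrel_fst_continuous V(1)])
  moreover have "p \<in> N" unfolding N_def using x V(2) \<open>(x, x) \<in> topspace T\<close> by auto
  moreover have "N \<subseteq> Id_on (topspace X)"
  proof
    fix q assume q: "q \<in> N"
    then have "q = (fst q, fst q)" using inj unfolding N_def by (metis (lifting) IntE fst_conv inj_onD mem_Collect_eq)
    moreover have "fst q \<in> topspace X"
      using q etale_eqrel_topspace etale_eqrel_subset unfolding N_def by auto
    ultimately show "q \<in> Id_on (topspace X)" by (metis Id_onI)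
  qed
  ultimately show "\<exists>T'. openin T T' \<and> p \<in> T' \<and> T' \<subseteq> Id_on (topspace X)" by blast
qed

end

lemma openin_join_top:
  "openin (join_top X R TR S TS) U \<longleftrightarrow> U \<subseteq> join_rel (topspace X) R S \<and>
     openin (fibred_top TR TS) {w \<in> topspace (fibred_top TR TS). rs_map w \<in> U}"
proof -
  let ?F = "fibred_top TR TS" and ?J = "join_rel (topspace X) R S"
  have "istopology (\<lambda>U. U \<subseteq> ?J \<and> openin ?F {w \<in> topspace ?F. rs_map w \<in> U})"
    unfolding istopology_def
  proof (rule conjI; intro allI impI)
    fix A B assume "A \<subseteq> ?J \<and> openin ?F {w \<in> topspace ?F. rs_map w \<in> A}"
      "B \<subseteq> ?J \<and> openin ?F {w \<in> topspace ?F. rs_map w \<in> B}"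
    moreover have "{w \<in> topspace ?F. rs_map w \<in> A \<inter> B}
        = {w \<in> topspace ?F. rs_map w \<in> A} \<inter> {w \<in> topspace ?F. rs_map w \<in> B}"
      by auto
    ultimately show "A \<inter> B \<subseteq> ?J \<and> openin ?F {w \<in> topspace ?F. rs_map w \<in> A \<inter> B}" by auto
  next
    fix K assume "\<forall>A\<in>K. A \<subseteq> ?J \<and> openin ?F {w \<in> topspace ?F. rs_map w \<in> A}"
    moreover have "{w \<in> topspace ?F. rs_map w \<in> \<Union>K} = (\<Union>A\<in>K. {w \<in> topspace ?F. rs_map w \<in> A})"
      by auto
    ultimately show "\<Union>K \<subseteq> ?J \<and> openin ?F {w \<in> topspace ?F. rs_map w \<in> \<Union>K}"
      by (auto intro!: openin_Union)
  qed
  then show ?thesis unfolding join_top_def by simp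
qed

locale transverse_etale_eqrels =
  fixes X :: "'a topology" and R S :: "('a \<times> 'a) set" and TR TS :: "('a \<times> 'a) topology"
  assumes R: "etale_eqrel X R TR" and S: "etale_eqrel X S TS"
    and transverse: "transverse X R TR S TS" and Hausdorff: "Hausdorff_space X"
begin

abbreviation "F \<equiv> fibred_top TR TS"
abbreviation "W \<equiv> join_top X R TR S TS"

lemma topspace_F: "topspace F = fibred R S"
  by (simp add: topspace_fibred_top etale_eqrel_topspace[OF R] etale_eqrel_topspace[OF S])

lemma Int_eq_Id_on: "R \<inter> S = Id_on (topspace X)"
  using transverse unfolding transverse_def by auto

lemma exchange_exists:
  "\<exists>k. homeomorphic_map (fibred_top TS TR) F k \<and>
     (\<forall>w\<in>fibred S R. k w \<in> fibred R S \<and> rs_map (k w) = rs_map w)"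
proof -
  obtain h where h: "homeomorphic_map F (fibred_top TS TR) h"
      "\<forall>w\<in>fibred R S. rs_map (h w) = rs_map w"
    using transverse unfolding transverse_def rs_map_def by auto
  obtain k where k: "homeomorphic_maps F (fibred_top TS TR) h k"
    using h(1) homeomorphic_map_maps by blast
  have topSR: "topspace (fibred_top TS TR) = fibred S R"
    by (simp add: topspace_fibred_top etale_eqrel_topspace[OF R] etale_eqrel_topspace[OF S])
  have "k w \<in> fibred R S \<and> rs_map (k w) = rs_map w" if "w \<in> fibred S R" for w
  proof -
    have "k w \<in> fibred R S" "h (k w) = w"
      using k that topSR topspace_F continuous_map_image_subset_topspace
      unfolding homeomorphic_maps_def by blast+
    then show ?thesis using h(2) by metis
  qed
  then show ?thesis using k homeomorphic_maps_map by blast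
qed

definition exchange where
  "exchange = (SOME k. homeomorphic_map (fibred_top TS TR) F k \<and>
     (\<forall>w\<in>fibred S R. k w \<in> fibred R S \<and> rs_map (k w) = rs_map w))"

lemma continuous_map_exchange: "continuous_map (fibred_top TS TR) F exchange"
  and exchange_fibred: "w \<in> fibred S R \<Longrightarrow> exchange w \<in> fibred R S"
  and rs_map_exchange: "w \<in> fibred S R \<Longrightarrow> rs_map (exchange w) = rs_map w"
  using someI_ex[OF exchange_exists] homeomorphic_imp_continuous_map unfolding exchange_def by blast+

lemma relcomp_commute: "S O R \<subseteq> R O S"
proof
  fix p assume "p \<in> S O R"
  then obtain x y z where "p = (x, z)" "((x, y), (y, z)) \<in> fibred S R"
    by (auto simp: fibred_def)
  then show "p \<in> R O S"
    using exchange_fibred rs_map_exchange by (force simp: fibred_def rs_map_def)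
qed

lemma equiv_relcomp: "equiv (topspace X) (R O S)"
proof (rule equivI)
  show "R O S \<subseteq> topspace X \<times> topspace X"
    using etale_eqrel_subset[OF R] etale_eqrel_subset[OF S] by blast
  show "refl_on (topspace X) (R O S)"
    unfolding refl_on_def using etale_eqrel_refl[OF R] etale_eqrel_refl[OF S] by blast
  have "converse (R O S) = S O R"
    using etale_eqrel_equiv[OF R] etale_eqrel_equiv[OF S] by (simp add: converse_relcomp equiv_def sym_conv_converse_eq)
  then show "sym (R O S)" using relcomp_commute by (intro symI) blast
  have "R O S O R O S \<subseteq> R O R O S O S" using relcomp_commute by blast
  also have "\<dots> \<subseteq> R O S"
    using etale_eqrel_trans[OF R] etale_eqrel_trans[OF S] by blast
  finally have "(R O S) O (R O S) \<subseteq> R O S" by (simp add: O_assoc)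
  then show "trans (R O S)" unfolding trans_def by blast
qed

lemma join_rel_eq_relcomp: "join_rel (topspace X) R S = R O S"
proof -
  have "R \<union> S \<subseteq> R O S"
    using etale_eqrel_subset[OF R] etale_eqrel_subset[OF S] etale_eqrel_refl[OF R] etale_eqrel_refl[OF S]
    by blast
  moreover have "R O S \<subseteq> E" if "equiv (topspace X) E" "R \<union> S \<subseteq> E" for E
    using that unfolding equiv_def trans_def by blast
  ultimately show ?thesis unfolding join_rel_def using equiv_relcomp by blast
qed

lemma rs_map_inj_on: "inj_on rs_map (fibred R S)"
proof (rule inj_onI)
  fix v w assume v: "v \<in> fibred R S" and w: "w \<in> fibred R S" and e: "rs_map v = rs_map w"
  obtain x y z where v': "v = ((x, y), (y, z))" "(x, y) \<in> R" "(y, z) \<in> S"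
    using v unfolding fibred_def by auto
  obtain y' where w': "w = ((x, y'), (y', z))" "(x, y') \<in> R" "(y', z) \<in> S"
    using w e v' unfolding fibred_def rs_map_def by auto
  have "(y, y') \<in> R \<inter> S"
    using v' w' etale_eqrel_sym[OF R] etale_eqrel_trans[OF R] etale_eqrel_sym[OF S]
      etale_eqrel_trans[OF S] by blast
  then show "v = w" using v' w' Int_eq_Id_on by auto
qed

lemma rs_map_image: "rs_map ` fibred R S = R O S"
  unfolding fibred_def rs_map_def by force

lemma topspace_W: "topspace W = R O S"
proof -
  have "{w \<in> topspace F. rs_map w \<in> R O S} = topspace F" using rs_map_image topspace_F by auto
  then have "openin W (R O S)" by (simp add: openin_join_top join_rel_eq_relcomp)
  then show ?thesis using openin_subset openin_join_top[of X R TR S TS "topspace W"]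
    by (auto simp: join_rel_eq_relcomp)
qed

lemma homeomorphic_map_rs_map: "homeomorphic_map F W rs_map"
proof (rule bijective_open_imp_homeomorphic_map)
  show "continuous_map F W rs_map"
    unfolding continuous_map_def
  proof (intro conjI allI impI)
    show "rs_map \<in> topspace F \<rightarrow> topspace W" using topspace_W topspace_F rs_map_image by blast
    show "openin F {x \<in> topspace F. rs_map x \<in> U}" if "openin W U" for U
      using that openin_join_top by blast
  qed
  show "open_map F W rs_map"
    unfolding open_map_def
  proof (intro allI impI)
    fix V assume V: "openin F V"
    have VF: "V \<subseteq> fibred R S" using openin_subset[OF V] topspace_F by simp
    then have "{w \<in> topspace F. rs_map w \<in> rs_map ` V} = V"
      using rs_map_inj_on topspace_F by (auto dest: inj_onD)
    moreover have "rs_map ` V \<subseteq> R O S" using VF rs_map_image by blast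
    ultimately show "openin W (rs_map ` V)" using V by (simp add: openin_join_top join_rel_eq_relcomp)
  qed
  show "rs_map ` topspace F = topspace W" using topspace_F topspace_W rs_map_image by simp
  show "inj_on rs_map (topspace F)" using topspace_F rs_map_inj_on by simp
qed

definition factor where "factor = inv_into (fibred R S) rs_map"

lemma continuous_map_factor: "continuous_map W F factor"
  using homeomorphic_maps_inv_into[OF homeomorphic_map_rs_map]
  unfolding homeomorphic_maps_def factor_def topspace_F by blast

lemma factor_fibred: "p \<in> R O S \<Longrightarrow> factor p \<in> fibred R S"
  and rs_map_factor: "p \<in> R O S \<Longrightarrow> rs_map (factor p) = p"
  unfolding factor_def using rs_map_image inv_into_into f_inv_into_f by metis+

lemma fst_factor: "p \<in> R O S \<Longrightarrow> fst (fst (factor p)) = fst p"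
  and snd_factor: "p \<in> R O S \<Longrightarrow> snd (snd (factor p)) = snd p"
  using rs_map_factor unfolding rs_map_def by (metis fst_conv snd_conv)+

text \<open>Write \<open>p = a \<cdot> b\<close> and \<open>q = c \<cdot> d\<close> with \<open>a, c \<in> R\<close> and \<open>b, d \<in> S\<close>; the exchange map
  rewrites \<open>b \<cdot> c = c' \<cdot> b'\<close> with \<open>c' \<in> R\<close>, \<open>b' \<in> S\<close>, so \<open>p \<cdot> q = (a \<cdot> c') \<cdot> (b' \<cdot> d)\<close> is
  built from continuous operations.\<close>
lemma continuous_map_join_top_product: "continuous_map (fibred_top W W) W rs_map"
proof -
  let ?Z = "fibred_top W W"
  define u where "u P = factor (fst P)" for P :: "('a \<times> 'a) \<times> ('a \<times> 'a)"
  define v where "v P = factor (snd P)" for P :: "('a \<times> 'a) \<times> ('a \<times> 'a)"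
  define e where "e P = exchange (snd (u P), fst (v P))" for P
  have u: "continuous_map ?Z F u" and v: "continuous_map ?Z F v"
    unfolding u_def v_def
    using continuous_map_compose[OF continuous_map_fibred_top_fst continuous_map_factor]
      continuous_map_compose[OF continuous_map_fibred_top_snd continuous_map_factor]
    by (simp_all add: o_def)
  have uv: "u P \<in> fibred R S \<and> v P \<in> fibred R S \<and>
     fst (fst (u P)) = fst (fst P) \<and> snd (snd (u P)) = snd (fst P) \<and>
     fst (fst (v P)) = fst (snd P) \<and> snd (snd (v P)) = snd (snd P) \<and>
     snd (fst P) = fst (snd P)" if "P \<in> topspace ?Z" for P
    using that factor_fibred fst_factor snd_factor
    unfolding u_def v_def topspace_fibred_top topspace_W mem_fibred_iff by auto
  have e: "continuous_map ?Z F e"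
    unfolding e_def
    using continuous_map_compose[OF continuous_map_into_fibred_top[OF
          continuous_map_compose[OF u continuous_map_fibred_top_snd]
          continuous_map_compose[OF v continuous_map_fibred_top_fst]] continuous_map_exchange] uv
    by (auto simp: o_def mem_fibred_iff)
  have e_fibred: "e P \<in> fibred R S \<and> fst (fst (e P)) = fst (snd (u P)) \<and> snd (snd (e P)) = snd (fst (v P))"
    if "P \<in> topspace ?Z" for P
    using exchange_fibred rs_map_exchange uv[OF that] unfolding e_def rs_map_def
    by (auto simp: mem_fibred_iff)
  have "continuous_map ?Z TR (\<lambda>P. rs_map (fst (u P), fst (e P)))"
    using continuous_map_compose[OF continuous_map_into_fibred_top[OF
          continuous_map_compose[OF u continuous_map_fibred_top_fst]
          continuous_map_compose[OF e continuous_map_fibred_top_fst]]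
        etale_eqrel_product_continuous[OF R]] uv e_fibred
    by (auto simp: o_def mem_fibred_iff)
  moreover have "continuous_map ?Z TS (\<lambda>P. rs_map (snd (e P), snd (v P)))"
    using continuous_map_compose[OF continuous_map_into_fibred_top[OF
          continuous_map_compose[OF e continuous_map_fibred_top_snd]
          continuous_map_compose[OF v continuous_map_fibred_top_snd]]
        etale_eqrel_product_continuous[OF S]] uv e_fibred
    by (auto simp: o_def mem_fibred_iff)
  ultimately have "continuous_map ?Z F (\<lambda>P. (rs_map (fst (u P), fst (e P)), rs_map (snd (e P), snd (v P))))"
    using e_fibred by (intro continuous_map_into_fibred_top) (auto simp: rs_map_def mem_fibred_iff)
  from continuous_map_compose[OF this homeomorphic_imp_continuous_map[OF homeomorphic_map_rs_map]]
  have "continuous_map ?Z W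
      (\<lambda>P. rs_map (rs_map (fst (u P), fst (e P)), rs_map (snd (e P), snd (v P))))"
    by (simp add: o_def)
  then show ?thesis
    by (rule continuous_map_eq) (use uv in \<open>auto simp: rs_map_def\<close>)
qed

text \<open>The inverse of \<open>a \<cdot> b\<close> is \<open>b\<inverse> \<cdot> a\<inverse> \<in> S \<times>\<^sub>X R\<close>, which the exchange map moves back
  into \<open>R \<times>\<^sub>X S\<close>.\<close>
lemma homeomorphic_map_join_top_inverse: "homeomorphic_map W W (\<lambda>(x, y). (y, x))"
proof (rule homeomorphic_map_involution)
  let ?inv = "\<lambda>(x::'a, y::'a). (y, x)"
  have b: "continuous_map W TS (\<lambda>p. ?inv (snd (factor p)))"
    using continuous_map_compose[OF continuous_map_compose[OF continuous_map_factor
          continuous_map_fibred_top_snd] etale_eqrel_inverse_continuous[OF S]]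
    by (simp add: o_def)
  have a: "continuous_map W TR (\<lambda>p. ?inv (fst (factor p)))"
    using continuous_map_compose[OF continuous_map_compose[OF continuous_map_factor
          continuous_map_fibred_top_fst] etale_eqrel_inverse_continuous[OF R]]
    by (simp add: o_def)
  have fac: "factor p \<in> fibred R S \<and> fst (fst (factor p)) = fst p \<and> snd (snd (factor p)) = snd p"
    if "p \<in> topspace W" for p
    using that factor_fibred fst_factor snd_factor topspace_W by auto
  have SR: "(?inv (snd (factor p)), ?inv (fst (factor p))) \<in> fibred S R" if "p \<in> topspace W" for p
    using fac[OF that] etale_eqrel_sym[OF R] etale_eqrel_sym[OF S]
    by (auto simp: mem_fibred_iff split: prod.splits)
  have "continuous_map W F (\<lambda>p. exchange (?inv (snd (factor p)), ?inv (fst (factor p))))"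
    using continuous_map_compose[OF continuous_map_into_fibred_top[OF b a] continuous_map_exchange] fac
    by (auto simp: o_def mem_fibred_iff case_prod_beta)
  from continuous_map_compose[OF this homeomorphic_imp_continuous_map[OF homeomorphic_map_rs_map]]
  have "continuous_map W W (\<lambda>p. rs_map (exchange (?inv (snd (factor p)), ?inv (fst (factor p)))))"
    by (simp add: o_def)
  moreover have "rs_map (exchange (?inv (snd (factor p)), ?inv (fst (factor p)))) = ?inv p"
    if "p \<in> topspace W" for p
    using rs_map_exchange[OF SR[OF that]] fac[OF that] by (simp add: rs_map_def case_prod_beta)
  ultimately show "continuous_map W W ?inv"
    by (rule continuous_map_eq)
qed auto

lemma local_homeomorphism_map_join_top_fst: "local_homeomorphism_map W X fst"
proof -
  have "local_homeomorphism_map F TR fst"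
    using local_homeomorphism_map_fibred_top_fst etale_eqrel_snd_continuous[OF R]
      etale_eqrel_fst_local_homeomorphism[OF S] .
  moreover have "homeomorphic_map W F factor"
    using homeomorphic_maps_inv_into[OF homeomorphic_map_rs_map] homeomorphic_maps_map
    unfolding factor_def topspace_F by blast
  ultimately have "local_homeomorphism_map W X (fst \<circ> (fst \<circ> factor))"
    by (intro local_homeomorphism_map_compose[OF _ etale_eqrel_fst_local_homeomorphism[OF R]]
        local_homeomorphism_map_compose[OF homeomorphic_imp_local_homeomorphism_map])
  then show ?thesis
    by (rule local_homeomorphism_map_cong) (use fst_factor topspace_W in auto)
qed

lemma countable_equiv_rel_relcomp: "countable_equiv_rel (topspace X) (R O S)"
  unfolding countable_equiv_rel_def
proof (intro conjI ballI equiv_relcomp)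
  fix x assume x: "x \<in> topspace X"
  have "countable (R `` {x})" using R x unfolding etale_eqrel_def countable_equiv_rel_def by blast
  moreover have "countable (S `` {y})" if "y \<in> R `` {x}" for y
    using S that etale_eqrel_subset[OF R] unfolding etale_eqrel_def countable_equiv_rel_def by blast
  ultimately have "countable (\<Union>y\<in>R `` {x}. S `` {y})" by (intro countable_UN)
  moreover have "(R O S) `` {x} = (\<Union>y\<in>R `` {x}. S `` {y})" by auto
  ultimately show "countable ((R O S) `` {x})" by simp
qed

lemma etale_eqrel_join_top: "etale_eqrel X (join_rel (topspace X) R S) W"
proof -
  have "Hausdorff_space F" "second_countable F"
    using R S by (simp_all add: Hausdorff_space_fibred_top second_countable_fibred_top etale_eqrel_def)
  moreover have "locally_compact_space F"
    using R S by (intro locally_compact_space_fibred_top[OF Hausdorff etale_eqrel_snd_continuous[OF R]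
        etale_eqrel_fst_continuous[OF S]]) (simp_all add: etale_eqrel_def)
  ultimately have "Hausdorff_space W" "locally_compact_space W" "second_countable W"
    using homeomorphic_map_rs_map homeomorphic_map_imp_homeomorphic_space
      homeomorphic_Hausdorff_space homeomorphic_locally_compact_space
      homeomorphic_space_second_countability by blast+
  then show ?thesis
    unfolding etale_eqrel_def join_rel_eq_relcomp
    using countable_equiv_rel_relcomp topspace_W continuous_map_join_top_product
      homeomorphic_map_join_top_inverse local_homeomorphism_map_join_top_fst by blast
qed

lemma compact_space_join_top:
  assumes "compact_space TR" "compact_space TS"
  shows "compact_space W"
proof -
  have "compact_space F"
    using compact_space_fibred_top[OF Hausdorff etale_eqrel_snd_continuous[OF R]
        etale_eqrel_fst_continuous[OF S] assms] .
  then show ?thesis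
    using homeomorphic_map_rs_map homeomorphic_map_imp_homeomorphic_space homeomorphic_compact_space
    by blast
qed

lemma subset_relcomp_left: "R \<subseteq> R O S"
  using etale_eqrel_subset[OF R] etale_eqrel_refl[OF S] by blast

lemma subset_relcomp_right: "S \<subseteq> R O S"
  using etale_eqrel_subset[OF S] etale_eqrel_refl[OF R] by blast

lemma rs_map_in_left_iff:
  assumes "w \<in> fibred R S"
  shows "rs_map w \<in> R \<longleftrightarrow> snd w \<in> Id_on (topspace X)"
proof -
  obtain x y z where w: "w = ((x, y), (y, z))" "(x, y) \<in> R" "(y, z) \<in> S"
    using assms by (auto simp: fibred_def)
  have "(x, z) \<in> R \<longleftrightarrow> (y, z) \<in> R"
    using w etale_eqrel_sym[OF R] etale_eqrel_trans[OF R] by blast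
  then show ?thesis using w Int_eq_Id_on by (auto simp: rs_map_def)
qed

lemma rs_map_in_right_iff:
  assumes "w \<in> fibred R S"
  shows "rs_map w \<in> S \<longleftrightarrow> fst w \<in> Id_on (topspace X)"
proof -
  obtain x y z where w: "w = ((x, y), (y, z))" "(x, y) \<in> R" "(y, z) \<in> S"
    using assms by (auto simp: fibred_def)
  have "(x, z) \<in> S \<longleftrightarrow> (x, y) \<in> S"
    using w etale_eqrel_sym[OF S] etale_eqrel_trans[OF S] by blast
  then show ?thesis using w Int_eq_Id_on by (auto simp: rs_map_def)
qed

lemma openin_join_top_left: "openin W R"
proof -
  have "{w \<in> topspace F. rs_map w \<in> R} = {w \<in> topspace F. snd w \<in> Id_on (topspace X)}"
    using rs_map_in_left_iff topspace_F by auto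
  moreover have "openin F {w \<in> topspace F. snd w \<in> Id_on (topspace X)}"
    using continuous_map_fibred_top_snd openin_etale_eqrel_Id_on[OF S]
    by (rule openin_continuous_map_preimage)
  ultimately show ?thesis
    using subset_relcomp_left by (simp add: openin_join_top join_rel_eq_relcomp)
qed

lemma openin_join_top_right: "openin W S"
proof -
  have "{w \<in> topspace F. rs_map w \<in> S} = {w \<in> topspace F. fst w \<in> Id_on (topspace X)}"
    using rs_map_in_right_iff topspace_F by auto
  moreover have "openin F {w \<in> topspace F. fst w \<in> Id_on (topspace X)}"
    using continuous_map_fibred_top_fst openin_etale_eqrel_Id_on[OF R]
    by (rule openin_continuous_map_preimage)
  ultimately show ?thesis
    using subset_relcomp_right by (simp add: openin_join_top join_rel_eq_relcomp)
qed

text \<open>The inclusion \<open>a \<mapsto> a \<cdot> (snd a, snd a)\<close> of \<open>TR\<close> into \<open>W\<close> is continuous, and \<open>fst\<close> is a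
  local homeomorphism for both topologies on \<open>R\<close>.\<close>
lemma subtopology_join_top_left: "subtopology W R = TR"
proof -
  have "continuous_map TR F (\<lambda>a. (a, (snd a, snd a)))"
    using continuous_map_compose[OF etale_eqrel_snd_continuous[OF R] etale_eqrel_diagonal_continuous[OF S]]
    by (intro continuous_map_into_fibred_top) (simp_all add: o_def)
  from continuous_map_compose[OF this homeomorphic_imp_continuous_map[OF homeomorphic_map_rs_map]]
  have "continuous_map TR W id"
    by (rule continuous_map_eq) (simp add: rs_map_def)
  then have "continuous_map TR (subtopology W R) id"
    using etale_eqrel_topspace[OF R] by (auto simp: continuous_map_in_subtopology)
  then show ?thesis
    using local_homeomorphism_map_topology_unique etale_eqrel_fst_local_homeomorphism[OF R]
      local_homeomorphism_map_subtopology[OF local_homeomorphism_map_join_top_fst openin_join_top_left]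
      etale_eqrel_topspace[OF R] topspace_W subset_relcomp_left
    by (metis inf.absorb_iff2 topspace_subtopology)
qed

lemma subtopology_join_top_right: "subtopology W S = TS"
proof -
  have "continuous_map TS F (\<lambda>b. ((fst b, fst b), b))"
    using continuous_map_compose[OF etale_eqrel_fst_continuous[OF S] etale_eqrel_diagonal_continuous[OF R]]
    by (intro continuous_map_into_fibred_top) (simp_all add: o_def)
  from continuous_map_compose[OF this homeomorphic_imp_continuous_map[OF homeomorphic_map_rs_map]]
  have "continuous_map TS W id"
    by (rule continuous_map_eq) (simp add: rs_map_def)
  then have "continuous_map TS (subtopology W S) id"
    using etale_eqrel_topspace[OF S] by (auto simp: continuous_map_in_subtopology)
  then show ?thesis
    using local_homeomorphism_map_topology_unique etale_eqrel_fst_local_homeomorphism[OF S]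
      local_homeomorphism_map_subtopology[OF local_homeomorphism_map_join_top_fst openin_join_top_right]
      etale_eqrel_topspace[OF S] topspace_W subset_relcomp_right
    by (metis inf.absorb_iff2 topspace_subtopology)
qed

text \<open>For any such \<open>V\<close>, the product of \<open>V\<close> restricted to \<open>R \<times>\<^sub>X S\<close> is continuous from \<open>F\<close>,
  so \<open>V\<close> is coarser than \<open>W\<close>, and \<open>fst\<close> is a local homeomorphism for both.\<close>
lemma join_top_unique:
  assumes V: "etale_eqrel X (join_rel (topspace X) R S) V"
    and VR: "subtopology V R = TR" and VS: "subtopology V S = TS"
  shows "V = W"
proof -
  have topV: "topspace V = R O S" using etale_eqrel_topspace[OF V] join_rel_eq_relcomp by simp
  have "F = subtopology (prod_topology (subtopology V R) (subtopology V S)) (fibred R S)"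
    using VR VS etale_eqrel_topspace[OF R] etale_eqrel_topspace[OF S] by (simp add: fibred_top_def)
  also have "\<dots> = subtopology (prod_topology V V) ((R \<times> S) \<inter> fibred R S)"
    by (simp add: subtopology_Times[symmetric] subtopology_subtopology)
  also have "(R \<times> S) \<inter> fibred R S = fibred (R O S) (R O S) \<inter> fibred R S"
    using subset_relcomp_left subset_relcomp_right by (auto simp: mem_fibred_iff)
  also have "subtopology (prod_topology V V) (fibred (R O S) (R O S) \<inter> fibred R S)
      = subtopology (fibred_top V V) (fibred R S)"
    by (simp add: fibred_top_def topV subtopology_subtopology)
  finally have "continuous_map F V rs_map"
    using continuous_map_from_subtopology[OF etale_eqrel_product_continuous[OF V]] by simp
  from continuous_map_compose[OF continuous_map_factor this]
  have "continuous_map W V id"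
    by (rule continuous_map_eq) (use rs_map_factor topspace_W in auto)
  then show ?thesis
    using local_homeomorphism_map_topology_unique local_homeomorphism_map_join_top_fst
      etale_eqrel_fst_local_homeomorphism[OF V] topV topspace_W
    by metis
qed

end

theorem proposition3p3:
  fixes X :: "'a topology" and R S :: "('a \<times> 'a) set" and TR TS :: "('a \<times> 'a) topology"
  assumes "compact_space X" and "metrizable_space X" and "X dim_le 0"
    and "etale_eqrel X R TR" and "etale_eqrel X S TS"
    and "transverse X R TR S TS"
  shows "etale_eqrel X (join_rel (topspace X) R S) (join_top X R TR S TS)
     \<and> (ceer X R TR \<and> ceer X S TS \<longrightarrow> ceer X (join_rel (topspace X) R S) (join_top X R TR S TS))
     \<and> subtopology (join_top X R TR S TS) R = TR
     \<and> subtopology (join_top X R TR S TS) S = TS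
     \<and> (\<forall>W. etale_eqrel X (join_rel (topspace X) R S) W \<and> subtopology W R = TR \<and> subtopology W S = TS
            \<longrightarrow> W = join_top X R TR S TS)
     \<and> openin (join_top X R TR S TS) R \<and> openin (join_top X R TR S TS) S"
proof -
  interpret transverse_etale_eqrels X R S TR TS
    using assms metrizable_imp_Hausdorff_space by unfold_locales auto
  show ?thesis
    using etale_eqrel_join_top compact_space_join_top subtopology_join_top_left
      subtopology_join_top_right join_top_unique openin_join_top_left openin_join_top_right
    unfolding ceer_def by blast
qed

end
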